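(* If $G$ is a graph with $n$ vertices and $m$ edges and $\vec{G}$ is any orientation of $G$, then $$Mo(G)\geq nm-2\sum_{(v,u)\in E(\vec{G})}\bar{n}_G(v,u).$$
   Context: All graphs are finite and simple. For a graph $G$ and an edge $uv$ of $G$, $n_G(u,v)$ denotes the number of vertices of $G$ whose distance in $G$ to $u$ is smaller than their distance to $v$, and $\bar{n}_G(v,u)=n-n_G(u,v)$, i.e. the number of vertices whose distance to $v$ is at most their distance to $u$. The Mostar index of $G$ is $Mo(G)=\sum_{uv\in E(G)}|n_G(u,v)-n_G(v,u)|$. An orientation $\vec{G}$ replaces each edge $uv$ by exactly one of the arcs $(u,v)$, $(v,u)$. *)

theory Defs
  imports Main "HOL-Library.Extended_Nat"
begin

definition simple_graph :: "'a set \<Rightarrow> 'a set set \<Rightarrow> bool" where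
  "simple_graph V E \<longleftrightarrow> finite V \<and>
     (\<forall>e\<in>E. \<exists>a b. e = {a, b} \<and> a \<noteq> b \<and> a \<in> V \<and> b \<in> V)"

definition is_walk :: "'a set \<Rightarrow> 'a set set \<Rightarrow> 'a list \<Rightarrow> bool" where
  "is_walk V E xs \<longleftrightarrow> xs \<noteq> [] \<and> set xs \<subseteq> V \<and>
     (\<forall>i. Suc i < length xs \<longrightarrow> {xs ! i, xs ! Suc i} \<in> E)"

text \<open>Graph distance; infinite if no walk exists.\<close>
definition gdist :: "'a set \<Rightarrow> 'a set set \<Rightarrow> 'a \<Rightarrow> 'a \<Rightarrow> enat" where
  "gdist V E u v = Inf {enat (length xs - 1) | xs. is_walk V E xs \<and> hd xs = u \<and> last xs = v}"

definition nG :: "'a set \<Rightarrow> 'a set set \<Rightarrow> 'a \<Rightarrow> 'a \<Rightarrow> nat" where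
  "nG V E u v = card {w \<in> V. gdist V E w u < gdist V E w v}"

definition nbarG :: "'a set \<Rightarrow> 'a set set \<Rightarrow> 'a \<Rightarrow> 'a \<Rightarrow> int" where
  "nbarG V E v u = int (card V) - int (nG V E u v)"

definition mostar :: "'a set \<Rightarrow> 'a set set \<Rightarrow> int" where
  "mostar V E = (\<Sum>e\<in>E. (THE x. \<exists>u v. e = {u, v} \<and> x = \<bar>int (nG V E u v) - int (nG V E v u)\<bar>))"

definition orientation :: "'a set set \<Rightarrow> ('a \<times> 'a) set \<Rightarrow> bool" where
  "orientation E A \<longleftrightarrow> (\<forall>(a, b)\<in>A. {a, b} \<in> E) \<and>
     (\<forall>a b. {a, b} \<in> E \<longrightarrow> ((a, b) \<in> A \<longleftrightarrow> (b, a) \<notin> A))"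

end

theory Submission
  imports Defs
begin

text \<open>
  An orientation puts the arcs in bijection with the edges, so the Mostar index is a sum over
  arcs (v, u) of the terms |n(v, u) - n(u, v)|. Since the two sets counted by n(v, u) and n(u, v)
  are disjoint, n(v, u) + n(u, v) \<le> n, and therefore
  n - 2 nbar(v, u) = 2 n(u, v) - n \<le> n(u, v) - n(v, u) \<le> |n(v, u) - n(u, v)|.
\<close>

lemma mostar_term_doubleton:
  "(THE x. \<exists>u v. {a, b} = {u, v} \<and> x = \<bar>int (nG V E u v) - int (nG V E v u)\<bar>)
   = \<bar>int (nG V E a b) - int (nG V E b a)\<bar>"
proof (rule the_equality)
  fix x assume "\<exists>u v. {a, b} = {u, v} \<and> x = \<bar>int (nG V E u v) - int (nG V E v u)\<bar>"
  then obtain u v where "{a, b} = {u, v}" "x = \<bar>int (nG V E u v) - int (nG V E v u)\<bar>"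
    by blast
  then show "x = \<bar>int (nG V E a b) - int (nG V E b a)\<bar>"
    by (auto simp: doubleton_eq_iff abs_minus_commute)
qed blast

lemma nG_add_nG_le_card:
  assumes "finite V"
  shows "nG V E a b + nG V E b a \<le> card V"
proof -
  have "nG V E a b + nG V E b a
      = card ({w \<in> V. gdist V E w a < gdist V E w b} \<union> {w \<in> V. gdist V E w b < gdist V E w a})"
    unfolding nG_def using assms by (subst card_Un_disjoint) auto
  also have "\<dots> \<le> card V"
    using assms by (intro card_mono) auto
  finally show ?thesis .
qed

lemma card_minus_two_nbarG_le:
  assumes "finite V"
  shows "int (card V) - 2 * nbarG V E v u \<le> \<bar>int (nG V E v u) - int (nG V E u v)\<bar>"
  using nG_add_nG_le_card[OF assms, of E v u] unfolding nbarG_def by simp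

lemma orientation_bij_betw_edges:
  assumes "orientation E A" and "\<forall>e\<in>E. \<exists>a b. e = {a, b}"
  shows "bij_betw (\<lambda>(a, b). {a, b}) A E"
proof -
  have arc_edge: "\<And>a b. (a, b) \<in> A \<Longrightarrow> {a, b} \<in> E"
    and one_way: "\<And>a b. {a, b} \<in> E \<Longrightarrow> (a, b) \<in> A \<longleftrightarrow> (b, a) \<notin> A"
    using assms(1) unfolding orientation_def by auto
  have "inj_on (\<lambda>(a, b). {a, b}) A"
  proof (rule inj_onI, clarify)
    fix a b c d assume "(a, b) \<in> A" "(c, d) \<in> A" "{a, b} = {c, d}"
    then show "a = c \<and> b = d"
      using one_way[OF arc_edge] by (auto simp: doubleton_eq_iff)
  qed
  moreover have "(\<lambda>(a, b). {a, b}) ` A = E"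
  proof
    show "(\<lambda>(a, b). {a, b}) ` A \<subseteq> E"
      using arc_edge by auto
    show "E \<subseteq> (\<lambda>(a, b). {a, b}) ` A"
    proof
      fix e assume "e \<in> E"
      with assms(2) obtain a b where e: "e = {a, b}" by blast
      with \<open>e \<in> E\<close> one_way have "(a, b) \<in> A \<or> (b, a) \<in> A" by blast
      then show "e \<in> (\<lambda>(a, b). {a, b}) ` A"
        unfolding e by (auto simp: insert_commute intro: rev_image_eqI)
    qed
  qed
  ultimately show ?thesis
    unfolding bij_betw_def by blast
qed

lemma mostar_eq_sum_arcs:
  assumes "orientation E A" and "\<forall>e\<in>E. \<exists>a b. e = {a, b}"
  shows "mostar V E = (\<Sum>(v, u)\<in>A. \<bar>int (nG V E v u) - int (nG V E u v)\<bar>)"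
  unfolding mostar_def
  by (subst sum.reindex_bij_betw[OF orientation_bij_betw_edges[OF assms], symmetric])
     (simp add: case_prod_unfold mostar_term_doubleton)

theorem lemma1:
  fixes V :: "'a set" and E :: "'a set set" and A :: "('a \<times> 'a) set"
  assumes "simple_graph V E"
    and "orientation E A"
  shows "mostar V E \<ge> int (card V) * int (card E) - 2 * (\<Sum>(v, u)\<in>A. nbarG V E v u)"
proof -
  have "finite V" and doubletons: "\<forall>e\<in>E. \<exists>a b. e = {a, b}"
    using assms(1) unfolding simple_graph_def by blast+
  have "card E = card A"
    using bij_betw_same_card[OF orientation_bij_betw_edges[OF assms(2) doubletons]] by simp
  then have "int (card V) * int (card E) - 2 * (\<Sum>(v, u)\<in>A. nbarG V E v u)
      = (\<Sum>(v, u)\<in>A. int (card V) - 2 * nbarG V E v u)"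
    by (simp add: case_prod_unfold sum_subtractf sum_distrib_left)
  also have "\<dots> \<le> (\<Sum>(v, u)\<in>A. \<bar>int (nG V E v u) - int (nG V E u v)\<bar>)"
    using card_minus_two_nbarG_le[OF \<open>finite V\<close>] by (intro sum_mono) (simp add: case_prod_unfold)
  also have "\<dots> = mostar V E"
    using mostar_eq_sum_arcs[OF assms(2) doubletons] by simp
  finally show ?thesis .
qed

end
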